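(* Let $A=(A(i,j))_{i,j\in\mathbb{N}}$ be an infinite matrix with entries in $\{0,1\}$, let $(X,\mu)$ be a $\sigma$-finite measure space, and let $(\{f_i\}_{i=1}^\infty,\{D_i\}_{i=1}^\infty)$ together with a nonsingular transformation $F:X\to X$ be an $A_\infty$-branching system on $(X,\mu)$. Then there exists a $*$-homomorphism $\pi:O_A\rightarrow \mathcal{B}(L_2(X,\mu))$ such that for every $i\in\mathbb{N}$ and every $\phi\in L_2(X,\mu)$, $$\pi(S_i)\phi=\chi_{R_i}\cdot(\Phi_{f_i^{-1}})^{1/2}\cdot(\phi\circ F).$$
   Context: Notation: for measurable $Y,Z\subseteq X$, write $Y\stackrel{\mu\text{-a.e.}}{=}Z$ if $\mu(Y\setminus Z)=0=\mu(Z\setminus Y)$. For a measurable map $h$ on a measurable set $W$, $\mu\circ h$ is the measure $E\mapsto\mu(h(E))$ on $W$. For finite $U,V\subseteq\mathbb{N}$ and $j\in\mathbb{N}$ put $A(U,V,j)=\prod_{u\in U}A(u,j)\prod_{v\in V}(1-A(v,j))$. A transformation $F$ is nonsingular if $\mu(F^{-1}(E))=0$ whenever $\mu(E)=0$. An $A_\infty$-branching system on $(X,\mu)$ is a family $(\{f_i\}_{i=1}^\infty,\{D_i\}_{i=1}^\infty)$ together with a nonsingular transformation $F:X\to X$ such that: (1) $f_i:D_i\to R_i$ is measurable, $D_i,R_i$ are measurable subsets of $X$, and $f_i(D_i)\stackrel{\mu\text{-a.e.}}{=}R_i$ for each $i$; (2) $F\circ f_i=\mathrm{id}_{D_i}$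 $\mu$-a.e. on $D_i$ for each $i$; (3) $\mu(R_i\cap R_j)=0$ for $i\neq j$; (4) $\mu(R_j\cap D_i)=0$ if $A(i,j)=0$ and $\mu(R_j\setminus D_i)=0$ if $A(i,j)=1$; (5) for each pair $U,V$ of finite subsets of $\mathbb{N}$ such that $A(U,V,j)=1$ for only finitely many $j$, $\bigcap_{u\in U}D_u\cap\bigcap_{v\in V}(X\setminus D_v)\stackrel{\mu\text{-a.e.}}{=}\bigcup_{j:A(U,V,j)=1}R_j$; (6) there exist the Radon-Nikodym derivatives $\Phi_{f_i}$ of $\mu\circ f_i$ with respect to $\mu$ on $D_i$ and $\Phi_{f_i^{-1}}$ of $\mu\circ f_i^{-1}$ with respect to $\mu$ on $R_i$, where $f_i^{-1}:=F|_{R_i}$. The functions $\Phi_{f_i}$, $\Phi_{f_i^{-1}}$ are regarded as functions on $X$ by setting them equal to $0$ outside $D_i$, respectively $R_i$. $O_A$ is the unital universal C*-algebra generated by partial isometries $\{S_i\}_{i\in\mathbb{N}}$ subject to: (i) $S_iS_i^*S_jS_j^*=0$ for $i\neq j$; (ii) $S_i^*S_i$ and $S_j^*S_j$ commute for all $i,j$; (iii) $S_i^*S_iS_jS_j^*=A(i,j)S_jS_j^*$ for all $i,j$; (iv) $\prod_{u\in U}S_u^*S_u\prod_{v\in V}(1-S_v^*S_v)=\sum_{j}A(U,V,j)S_jS_j^*$ for each pair of finite $U,V\subseteq\mathbb{N}$ such that $A(U,V,j)$ vanishes for all but finitely many $j$. *)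

theory Defs
  imports "HOL-Analysis.Analysis"
begin

definition ae_set_eq :: "'a measure \<Rightarrow> 'a set \<Rightarrow> 'a set \<Rightarrow> bool" where
  "ae_set_eq M Y Z \<longleftrightarrow> Y \<in> sets M \<and> Z \<in> sets M \<and>
     emeasure M (Y - Z) = 0 \<and> emeasure M (Z - Y) = 0"

definition nonsingular :: "'a measure \<Rightarrow> ('a \<Rightarrow> 'a) \<Rightarrow> bool" where
  "nonsingular M F \<longleftrightarrow> F \<in> measurable M M \<and>
     (\<forall>E\<in>sets M. emeasure M E = 0 \<longrightarrow> emeasure M (F -` E \<inter> space M) = 0)"

definition Acoef :: "(nat \<Rightarrow> nat \<Rightarrow> nat) \<Rightarrow> nat set \<Rightarrow> nat set \<Rightarrow> nat \<Rightarrow> nat" where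
  "Acoef A U V j = (\<Prod>u\<in>U. A u j) * (\<Prod>v\<in>V. 1 - A v j)"

definition is_RN_deriv_on :: "'a measure \<Rightarrow> 'a set \<Rightarrow> ('a \<Rightarrow> 'a) \<Rightarrow> ('a \<Rightarrow> real) \<Rightarrow> bool" where
  "is_RN_deriv_on M W h g \<longleftrightarrow> g \<in> borel_measurable M \<and> (\<forall>x. 0 \<le> g x) \<and>
     (\<forall>x. x \<notin> W \<longrightarrow> g x = 0) \<and>
     (\<forall>E\<in>sets M. E \<subseteq> W \<longrightarrow> h ` E \<in> sets M \<and>
        emeasure M (h ` E) = (\<integral>\<^sup>+ x. ennreal (g x) * indicator E x \<partial>M))"

text \<open>A-infinity branching system (f_i, D_i) with ranges R_i, transformation F, and
  the Radon-Nikodym derivatives Phi_{f_i} (Phif i) and Phi_{f_i^{-1}} (Phiinv i).\<close>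
definition branching_system ::
  "'a measure \<Rightarrow> (nat \<Rightarrow> nat \<Rightarrow> nat) \<Rightarrow> (nat \<Rightarrow> 'a \<Rightarrow> 'a) \<Rightarrow> (nat \<Rightarrow> 'a set) \<Rightarrow>
   (nat \<Rightarrow> 'a set) \<Rightarrow> ('a \<Rightarrow> 'a) \<Rightarrow> (nat \<Rightarrow> 'a \<Rightarrow> real) \<Rightarrow> (nat \<Rightarrow> 'a \<Rightarrow> real) \<Rightarrow> bool" where
  "branching_system M A f D R F Phif Phiinv \<longleftrightarrow>
     nonsingular M F \<and>
     (\<forall>i. D i \<in> sets M \<and> R i \<in> sets M \<and> f i \<in> measurable (restrict_space M (D i)) M \<and>
          f i ` D i \<subseteq> R i \<and> ae_set_eq M (f i ` D i) (R i)) \<and>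
     (\<forall>i. AE x in M. x \<in> D i \<longrightarrow> F (f i x) = x) \<and>
     (\<forall>i j. i \<noteq> j \<longrightarrow> emeasure M (R i \<inter> R j) = 0) \<and>
     (\<forall>i j. (A i j = 0 \<longrightarrow> emeasure M (R j \<inter> D i) = 0) \<and>
            (A i j = 1 \<longrightarrow> emeasure M (R j - D i) = 0)) \<and>
     (\<forall>U V. finite U \<and> finite V \<and> finite {j. Acoef A U V j = 1} \<longrightarrow>
        ae_set_eq M (space M \<inter> (\<Inter>u\<in>U. D u) \<inter> (\<Inter>v\<in>V. space M - D v))
                    (\<Union>j\<in>{j. Acoef A U V j = 1}. R j)) \<and>
     (\<forall>i. is_RN_deriv_on M (D i) (f i) (Phif i)) \<and>
     (\<forall>i. is_RN_deriv_on M (R i) F (Phiinv i))"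

text \<open>Elements of L2 are represented by square-integrable measurable complex functions;
  equality in L2 is equality almost everywhere.\<close>
type_synonym 'a op = "('a \<Rightarrow> complex) \<Rightarrow> ('a \<Rightarrow> complex)"

definition L2 :: "'a measure \<Rightarrow> ('a \<Rightarrow> complex) set" where
  "L2 M = {\<phi>. \<phi> \<in> borel_measurable M \<and> integrable M (\<lambda>x. (cmod (\<phi> x))\<^sup>2)}"

definition ae_eq :: "'a measure \<Rightarrow> ('a \<Rightarrow> complex) \<Rightarrow> ('a \<Rightarrow> complex) \<Rightarrow> bool" where
  "ae_eq M \<phi> \<psi> \<longleftrightarrow> (AE x in M. \<phi> x = \<psi> x)"

definition l2_inner :: "'a measure \<Rightarrow> ('a \<Rightarrow> complex) \<Rightarrow> ('a \<Rightarrow> complex) \<Rightarrow> complex" where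
  "l2_inner M \<phi> \<psi> = (LINT x|M. \<phi> x * cnj (\<psi> x))"

definition l2_norm :: "'a measure \<Rightarrow> ('a \<Rightarrow> complex) \<Rightarrow> real" where
  "l2_norm M \<phi> = sqrt (LINT x|M. (cmod (\<phi> x))\<^sup>2)"

definition bounded_L2_op :: "'a measure \<Rightarrow> 'a op \<Rightarrow> bool" where
  "bounded_L2_op M T \<longleftrightarrow>
     (\<forall>\<phi>\<in>L2 M. T \<phi> \<in> L2 M) \<and>
     (\<forall>\<phi>\<in>L2 M. \<forall>\<psi>\<in>L2 M. ae_eq M \<phi> \<psi> \<longrightarrow> ae_eq M (T \<phi>) (T \<psi>)) \<and>
     (\<forall>\<phi>\<in>L2 M. \<forall>\<psi>\<in>L2 M. \<forall>a b. ae_eq M (T (\<lambda>x. a * \<phi> x + b * \<psi> x))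
                                         (\<lambda>x. a * T \<phi> x + b * T \<psi> x)) \<and>
     (\<exists>C. \<forall>\<phi>\<in>L2 M. l2_norm M (T \<phi>) \<le> C * l2_norm M \<phi>)"

definition op_eq :: "'a measure \<Rightarrow> 'a op \<Rightarrow> 'a op \<Rightarrow> bool" where
  "op_eq M T U \<longleftrightarrow> (\<forall>\<phi>\<in>L2 M. ae_eq M (T \<phi>) (U \<phi>))"

definition is_adjoint :: "'a measure \<Rightarrow> 'a op \<Rightarrow> 'a op \<Rightarrow> bool" where
  "is_adjoint M T T' \<longleftrightarrow> bounded_L2_op M T \<and> bounded_L2_op M T' \<and>
     (\<forall>\<phi>\<in>L2 M. \<forall>\<psi>\<in>L2 M. l2_inner M (T \<phi>) \<psi> = l2_inner M \<phi> (T' \<psi>))"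

definition op_zero :: "'a op" where "op_zero = (\<lambda>\<phi> x. 0)"
definition op_sub :: "'a op \<Rightarrow> 'a op \<Rightarrow> 'a op" where "op_sub T U = (\<lambda>\<phi> x. T \<phi> x - U \<phi> x)"
definition op_scale :: "complex \<Rightarrow> 'a op \<Rightarrow> 'a op" where "op_scale c T = (\<lambda>\<phi> x. c * T \<phi> x)"
definition op_sum :: "(nat \<Rightarrow> 'a op) \<Rightarrow> nat set \<Rightarrow> 'a op" where
  "op_sum T J = (\<lambda>\<phi> x. \<Sum>j\<in>J. T j \<phi> x)"
text \<open>Product (composition) of operators Q u, u in a finite set U, in increasing order of u
  (the order is irrelevant under relation (ii)); the empty product is the identity.\<close>
definition op_prod :: "(nat \<Rightarrow> 'a op) \<Rightarrow> nat set \<Rightarrow> 'a op" where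
  "op_prod Q U = foldr (\<circ>) (map Q (sorted_list_of_set U)) id"

text \<open>By the universal property of O_A, a (unital) *-homomorphism O_A -> B(L2(X,mu)) is the
  same as a family of operators S i (the images of the generators S_i) in B(L2), with
  adjoints Sstar i, satisfying the defining relations of O_A: each S i is a partial
  isometry and relations (i)-(iv) hold.\<close>
definition OA_representation :: "'a measure \<Rightarrow> (nat \<Rightarrow> nat \<Rightarrow> nat) \<Rightarrow> (nat \<Rightarrow> 'a op) \<Rightarrow> (nat \<Rightarrow> 'a op) \<Rightarrow> bool" where
  "OA_representation M A S Sstar \<longleftrightarrow>
     (\<forall>i. is_adjoint M (S i) (Sstar i)) \<and>
     (\<forall>i. op_eq M (S i \<circ> Sstar i \<circ> S i) (S i)) \<and>
     (\<forall>i j. i \<noteq> j \<longrightarrow> op_eq M (S i \<circ> Sstar i \<circ> S j \<circ> Sstar j) op_zero) \<and>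
     (\<forall>i j. op_eq M (Sstar i \<circ> S i \<circ> Sstar j \<circ> S j) (Sstar j \<circ> S j \<circ> Sstar i \<circ> S i)) \<and>
     (\<forall>i j. op_eq M (Sstar i \<circ> S i \<circ> S j \<circ> Sstar j) (op_scale (of_nat (A i j)) (S j \<circ> Sstar j))) \<and>
     (\<forall>U V. finite U \<and> finite V \<and> finite {j. Acoef A U V j \<noteq> 0} \<longrightarrow>
        op_eq M (op_prod (\<lambda>u. Sstar u \<circ> S u) U \<circ> op_prod (\<lambda>v. op_sub id (Sstar v \<circ> S v)) V)
                (op_sum (\<lambda>j. op_scale (of_nat (Acoef A U V j)) (S j \<circ> Sstar j)) {j. Acoef A U V j \<noteq> 0}))"

end

theory Submission
  imports Defs
begin

text \<open>
  For each i, the measure E \<mapsto> mu(F(E)) on R_i, whose density is Phi_{f_i^{-1}}, is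
  the image of mu restricted to D_i under f_i, because f_i and F are mutually inverse up
  to null sets. Change of variables along f_i therefore shows that
  S_i phi = chi_{R_i} Phi_{f_i^{-1}}^{1/2} (phi \<circ> F) and
  S_i^* psi = chi_{D_i} Phi_{f_i}^{1/2} (psi \<circ> f_i) are adjoint contractions, and that
  Phi_{f_i^{-1}} (Phi_{f_i} \<circ> F) = 1 a.e. on R_i. The latter makes S_i^* S_i and S_i S_i^*
  the multiplication operators by chi_{D_i} and chi_{R_i}, and for such a family the
  relations of O_A reduce to the almost-everywhere set identities (3)--(5) of the
  branching system.
\<close>

lemma borel_measurable_cnj [measurable]:
  "g \<in> borel_measurable M \<Longrightarrow> (\<lambda>x. cnj (g x)) \<in> borel_measurable M"
  by (intro borel_measurable_continuous_on[where f=cnj]) (auto intro: continuous_intros)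

lemma AE_comp_nonsingular:
  assumes "nonsingular M F" and "AE y in M. P y"
  shows "AE x in M. P (F x)"
proof -
  have F: "F \<in> measurable M M"
    and null: "\<And>E. E \<in> null_sets M \<Longrightarrow> F -` E \<inter> space M \<in> null_sets M"
    using assms(1) measurable_sets[of F M M] unfolding nonsingular_def by (auto simp: null_sets_def)
  obtain N where N: "{x \<in> space M. \<not> P x} \<subseteq> N" "emeasure M N = 0" "N \<in> sets M"
    using assms(2) by (rule AE_E)
  have "F -` N \<inter> space M \<in> null_sets M"
    using null N(2,3) by (simp add: null_setsI)
  then show ?thesis
    by (rule AE_I') (use N(1) measurable_space[OF F] in auto)
qed

lemma L2_if_nn_integral_le:
  assumes \<phi>: "\<phi> \<in> L2 M" and \<psi>: "\<psi> \<in> borel_measurable M"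
    and le: "(\<integral>\<^sup>+ x. ennreal ((cmod (\<psi> x))\<^sup>2) \<partial>M) \<le> (\<integral>\<^sup>+ x. ennreal ((cmod (\<phi> x))\<^sup>2) \<partial>M)"
  shows "\<psi> \<in> L2 M" and "l2_norm M \<psi> \<le> l2_norm M \<phi>"
proof -
  have int_\<phi>: "integrable M (\<lambda>x. (cmod (\<phi> x))\<^sup>2)" using \<phi> unfolding L2_def by auto
  have eq_\<phi>: "(\<integral>\<^sup>+ x. ennreal ((cmod (\<phi> x))\<^sup>2) \<partial>M) = ennreal (\<integral> x. (cmod (\<phi> x))\<^sup>2 \<partial>M)"
    using int_\<phi> by (intro nn_integral_eq_integral) auto
  have "(\<lambda>x. (cmod (\<psi> x))\<^sup>2) \<in> borel_measurable M" using \<psi> by measurable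
  then have int_\<psi>: "integrable M (\<lambda>x. (cmod (\<psi> x))\<^sup>2)"
    unfolding integrable_iff_bounded using le eq_\<phi> by (auto simp: less_top[symmetric] top_unique)
  have eq_\<psi>: "(\<integral>\<^sup>+ x. ennreal ((cmod (\<psi> x))\<^sup>2) \<partial>M) = ennreal (\<integral> x. (cmod (\<psi> x))\<^sup>2 \<partial>M)"
    using int_\<psi> by (intro nn_integral_eq_integral) auto
  have "(\<integral> x. (cmod (\<psi> x))\<^sup>2 \<partial>M) \<le> (\<integral> x. (cmod (\<phi> x))\<^sup>2 \<partial>M)"
    using le eq_\<phi> eq_\<psi> by (simp add: ennreal_le_iff integral_nonneg_AE)
  then show "\<psi> \<in> L2 M" and "l2_norm M \<psi> \<le> l2_norm M \<phi>"
    using \<psi> int_\<psi> unfolding L2_def l2_norm_def by auto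
qed

lemma bounded_L2_op_if_contraction:
  assumes measurable: "\<And>\<phi>. \<phi> \<in> borel_measurable M \<Longrightarrow> T \<phi> \<in> borel_measurable M"
    and contraction: "\<And>\<phi>. \<phi> \<in> borel_measurable M \<Longrightarrow>
      (\<integral>\<^sup>+ x. ennreal ((cmod (T \<phi> x))\<^sup>2) \<partial>M) \<le> (\<integral>\<^sup>+ x. ennreal ((cmod (\<phi> x))\<^sup>2) \<partial>M)"
    and cong: "\<And>\<phi> \<psi>. ae_eq M \<phi> \<psi> \<Longrightarrow> ae_eq M (T \<phi>) (T \<psi>)"
    and linear: "\<And>\<phi> \<psi> a b. T (\<lambda>x. a * \<phi> x + b * \<psi> x) = (\<lambda>x. a * T \<phi> x + b * T \<psi> x)"
  shows "bounded_L2_op M T"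
proof -
  have "T \<phi> \<in> L2 M \<and> l2_norm M (T \<phi>) \<le> 1 * l2_norm M \<phi>" if "\<phi> \<in> L2 M" for \<phi>
    using L2_if_nn_integral_le[OF that measurable contraction] that by (simp add: L2_def)
  then show ?thesis
    unfolding bounded_L2_op_def using cong linear by (auto simp: ae_eq_def intro!: exI[of _ 1])
qed

lemma foldr_comp_multiplication_AE:
  assumes "\<And>k \<psi>. k \<in> set ks \<Longrightarrow> AE x in M. Q k \<psi> x = c k x * \<psi> x"
  shows "AE x in M. foldr (\<circ>) (map Q ks) id \<psi> x = (\<Prod>k\<leftarrow>ks. c k x) * (\<psi> x :: complex)"
  using assms
proof (induction ks arbitrary: \<psi>)
  case Nil
  show ?case by simp
next
  case (Cons k ks)
  have step: "foldr (\<circ>) (map Q (k # ks)) id \<psi> = Q k (foldr (\<circ>) (map Q ks) id \<psi>)"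
    by simp
  have "AE x in M. Q k (foldr (\<circ>) (map Q ks) id \<psi>) x = c k x * foldr (\<circ>) (map Q ks) id \<psi> x"
    using Cons.prems by auto
  moreover have "AE x in M. foldr (\<circ>) (map Q ks) id \<psi> x = (\<Prod>k\<leftarrow>ks. c k x) * \<psi> x"
    by (rule Cons.IH) (use Cons.prems in auto)
  ultimately show ?case unfolding step by eventually_elim (simp add: mult.assoc)
qed

lemma op_prod_multiplication_AE:
  assumes "finite U" and "\<And>k \<psi>. k \<in> U \<Longrightarrow> AE x in M. Q k \<psi> x = c k x * \<psi> x"
  shows "AE x in M. op_prod Q U \<psi> x = (\<Prod>k\<in>U. c k x) * (\<psi> x :: complex)"
  using foldr_comp_multiplication_AE[where ks="sorted_list_of_set U" and M=M and Q=Q and c=c] assms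
  by (simp add: op_prod_def prod.distinct_set_conv_list[symmetric])

lemma prod_indicator_eq_indicator_Inter:
  "finite U \<Longrightarrow> (\<Prod>u\<in>U. indicator (D u) x :: 'b::comm_semiring_1) = indicator (\<Inter>u\<in>U. D u) x"
  by (induction U rule: finite_induct) (simp_all add: indicator_inter_arith)

lemma sum_indicator_eq_indicator_Union:
  assumes "finite J" and "\<And>i j. i \<in> J \<Longrightarrow> j \<in> J \<Longrightarrow> i \<noteq> j \<Longrightarrow> x \<in> R i \<Longrightarrow> x \<notin> R j"
  shows "(\<Sum>j\<in>J. indicator (R j) x :: 'b::comm_semiring_1) = indicator (\<Union>j\<in>J. R j) x"
proof (cases "x \<in> (\<Union>j\<in>J. R j)")
  case True
  then obtain i where "i \<in> J" "x \<in> R i" by blast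
  then have "(\<Sum>j\<in>J. indicator (R j) x :: 'b) = (\<Sum>j\<in>J. if j = i then 1 else 0)"
    using assms(2) by (intro sum.cong) (auto split: split_indicator)
  with \<open>i \<in> J\<close> True assms(1) show ?thesis by simp
qed (auto split: split_indicator)

lemma Acoef_zero_one:
  assumes "\<And>i j. A i j \<in> {0, 1}" and "finite U" and "finite V"
  shows "Acoef A U V j = (if (\<forall>u\<in>U. A u j = 1) \<and> (\<forall>v\<in>V. A v j = 0) then 1 else 0)"
proof -
  have "(\<Prod>u\<in>U. A u j) = (if \<forall>u\<in>U. A u j = 1 then 1 else 0)"
    using assms(1)[of _ j] \<open>finite U\<close> by (auto intro: prod_zero)
  moreover have "(\<Prod>v\<in>V. 1 - A v j) = (if \<forall>v\<in>V. A v j = 0 then 1 else 0)"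
  proof (cases "\<forall>v\<in>V. A v j = 0")
    case False
    then obtain v where "v \<in> V" "A v j = 1" using assms(1)[of _ j] by blast
    then have "(\<Prod>v\<in>V. 1 - A v j) = 0" using \<open>finite V\<close> by (force simp: prod_zero_iff)
    then show ?thesis using False by simp
  qed simp
  ultimately show ?thesis unfolding Acoef_def by simp
qed

lemma mult_sqrt_eq_sqrt:
  assumes "0 \<le> (a::real)" and "0 \<le> b" and "a * b = 1"
  shows "a * sqrt b = sqrt a"
proof -
  have "a * sqrt b = sqrt a * sqrt (a * b)"
    using assms(1,2) by (simp add: real_sqrt_mult mult.assoc[symmetric])
  then show ?thesis using assms(3) by simp
qed

definition branch_op :: "'a set \<Rightarrow> ('a \<Rightarrow> real) \<Rightarrow> ('a \<Rightarrow> 'a) \<Rightarrow> 'a op" where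
  "branch_op R q F \<phi> x = complex_of_real (indicator R x * sqrt (q x)) * \<phi> (F x)"

definition branch_op_adj :: "'a set \<Rightarrow> ('a \<Rightarrow> real) \<Rightarrow> ('a \<Rightarrow> 'a) \<Rightarrow> 'a op" where
  "branch_op_adj D p f \<psi> x =
     complex_of_real (indicator D x * sqrt (p x)) * (if x \<in> D then \<psi> (f x) else 0)"

locale branch =
  fixes M :: "'a measure" and D R :: "'a set" and f F :: "'a \<Rightarrow> 'a" and p q :: "'a \<Rightarrow> real"
  assumes sigma_finite: "sigma_finite_measure M"
    and nonsingular: "nonsingular M F"
    and sets_D: "D \<in> sets M" and sets_R: "R \<in> sets M"
    and measurable_f: "f \<in> measurable (restrict_space M D) M"
    and image_f: "f ` D \<subseteq> R" and image_f_ae: "ae_set_eq M (f ` D) R"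
    and F_f: "AE x in M. x \<in> D \<longrightarrow> F (f x) = x"
    and RN_f: "is_RN_deriv_on M D f p" and RN_F: "is_RN_deriv_on M R F q"
begin

abbreviation S :: "'a op" where "S \<equiv> branch_op R q F"
abbreviation Sstar :: "'a op" where "Sstar \<equiv> branch_op_adj D p f"

lemma measurable_F: "F \<in> measurable M M"
  using nonsingular unfolding nonsingular_def by simp

lemma D_subset_space: "D \<subseteq> space M"
  using sets.sets_into_space[OF sets_D] .

lemma measurable_p [measurable]: "p \<in> borel_measurable M"
  and p_nonneg: "0 \<le> p x"
  and p_RN: "E \<in> sets M \<Longrightarrow> E \<subseteq> D \<Longrightarrow>
    f ` E \<in> sets M \<and> emeasure M (f ` E) = (\<integral>\<^sup>+ x. ennreal (p x) * indicator E x \<partial>M)"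
  using RN_f unfolding is_RN_deriv_on_def by auto

lemma measurable_q [measurable]: "q \<in> borel_measurable M"
  and q_nonneg: "0 \<le> q x"
  and q_outside: "x \<notin> R \<Longrightarrow> q x = 0"
  and q_RN: "E \<in> sets M \<Longrightarrow> E \<subseteq> R \<Longrightarrow>
    F ` E \<in> sets M \<and> emeasure M (F ` E) = (\<integral>\<^sup>+ x. ennreal (q x) * indicator E x \<partial>M)"
  using RN_F unfolding is_RN_deriv_on_def by auto

text \<open>
  F (f x) = x holds only almost everywhere on D. Discarding a null set gives D' and
  R' = f ` D' on which f and F are mutually inverse bijections; D - D' and R - R' are null.
\<close>

definition exceptional_set :: "'a set" where
  "exceptional_set = (SOME N. N \<in> null_sets M \<and> (\<forall>x\<in>D - N. F (f x) = x))"

lemma exceptional_set: "exceptional_set \<in> null_sets M" "\<forall>x\<in>D - exceptional_set. F (f x) = x"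
proof -
  obtain N where "\<And>x. x \<in> space M - N \<Longrightarrow> x \<in> D \<longrightarrow> F (f x) = x" "N \<in> null_sets M"
    using AE_E3[OF F_f] by blast
  then have "\<exists>N. N \<in> null_sets M \<and> (\<forall>x\<in>D - N. F (f x) = x)"
    using D_subset_space by blast
  from someI_ex[OF this] show "exceptional_set \<in> null_sets M" "\<forall>x\<in>D - exceptional_set. F (f x) = x"
    unfolding exceptional_set_def by auto
qed

definition "D' = D - exceptional_set"
definition "R' = f ` D'"

lemma D'_subset: "D' \<subseteq> D"
  unfolding D'_def by auto

lemma sets_D': "D' \<in> sets M"
  unfolding D'_def using sets_D exceptional_set(1) by auto

lemma sets_R': "R' \<in> sets M"
  unfolding R'_def using p_RN[OF sets_D' D'_subset] by auto

lemma R'_subset: "R' \<subseteq> R"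
  unfolding R'_def using D'_subset image_f by auto

lemma F_f_D': "x \<in> D' \<Longrightarrow> F (f x) = x \<and> f x \<in> R'"
  using exceptional_set(2) unfolding D'_def R'_def by auto

lemma f_F_R': "x \<in> R' \<Longrightarrow> F x \<in> D' \<and> f (F x) = x"
  unfolding R'_def using F_f_D' by auto

lemma measurable_f_D': "f \<in> measurable (restrict_space M D') M"
  using measurable_restrict_mono[OF measurable_f D'_subset] .

lemma sets_vimage_f_D': "A \<in> sets M \<Longrightarrow> f -` A \<inter> D' \<in> sets M"
  using measurable_sets[OF measurable_f_D'] sets_D' sets.sets_into_space[OF sets_D']
  by (simp add: space_restrict_space sets_restrict_space_iff Int_absorb2)

lemma AE_D': "AE x in M. x \<in> D \<longrightarrow> x \<in> D'"
  using AE_not_in[OF exceptional_set(1)] by (auto simp: D'_def elim!: eventually_mono)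

lemma AE_R': "AE x in M. x \<in> R \<longrightarrow> x \<in> R'"
proof -
  have E: "D \<inter> exceptional_set \<in> sets M"
    using sets_D exceptional_set(1) by auto
  have "(\<integral>\<^sup>+ x. ennreal (p x) * indicator (D \<inter> exceptional_set) x \<partial>M) = (\<integral>\<^sup>+ x. 0 \<partial>M)"
    using AE_not_in[OF exceptional_set(1)]
    by (intro nn_integral_cong_AE) (auto elim!: eventually_mono)
  then have "f ` (D \<inter> exceptional_set) \<in> null_sets M"
    using p_RN[OF E] by auto
  moreover have "R - f ` D \<in> null_sets M"
    using image_f_ae by (auto simp: ae_set_eq_def null_sets_def)
  moreover have "R - R' \<subseteq> (R - f ` D) \<union> f ` (D \<inter> exceptional_set)"
    unfolding R'_def D'_def by auto
  ultimately have "R - R' \<in> null_sets M"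
    using sets_R sets_R' by (blast intro: null_sets_subset)
  from AE_not_in[OF this] show ?thesis by (auto elim!: eventually_mono)
qed

lemma AE_f_F: "AE x in M. x \<in> R \<longrightarrow> F x \<in> D \<and> f (F x) = x"
  using AE_R' by (auto elim!: eventually_mono dest: f_F_R' simp: D'_def)

lemma density_q_eq_distr_f: "density M q = distr (restrict_space M D') M f"
proof (rule measure_eqI)
  fix A assume "A \<in> sets (density M q)"
  then have A: "A \<in> sets M" by simp
  have "F ` (A \<inter> R') = f -` A \<inter> D'"
    using F_f_D' f_F_R' by (auto intro!: image_eqI)
  moreover have "emeasure (density M q) A = (\<integral>\<^sup>+ x. ennreal (q x) * indicator (A \<inter> R') x \<partial>M)"
    using A AE_R' by (auto simp: emeasure_density q_outside split: split_indicator
        intro!: nn_integral_cong_AE elim!: eventually_mono)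
  moreover have "A \<inter> R' \<subseteq> R"
    using R'_subset by blast
  ultimately have "emeasure (density M q) A = emeasure M (f -` A \<inter> D')"
    using q_RN[of "A \<inter> R'"] A sets_R' by auto
  then show "emeasure (density M q) A = emeasure (distr (restrict_space M D') M f) A"
    using A measurable_f_D' sets_D' sets.sets_into_space[OF sets_D']
    by (simp add: emeasure_distr emeasure_restrict_space space_restrict_space Int_absorb2)
qed simp

lemma nn_integral_density_q:
  assumes "G \<in> borel_measurable M"
  shows "(\<integral>\<^sup>+ x. ennreal (q x) * G x \<partial>M) = (\<integral>\<^sup>+ y. G (f y) * indicator D' y \<partial>M)"
proof -
  have "(\<integral>\<^sup>+ x. ennreal (q x) * G x \<partial>M) = integral\<^sup>N (distr (restrict_space M D') M f) G"
    using assms by (simp add: nn_integral_density flip: density_q_eq_distr_f)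
  also have "\<dots> = (\<integral>\<^sup>+ y. G (f y) * indicator D' y \<partial>M)"
    using assms measurable_f_D' sets_D' sets.sets_into_space[OF sets_D']
    by (simp add: nn_integral_distr nn_integral_restrict_space Int_absorb2)
  finally show ?thesis .
qed

lemma integral_density_q:
  fixes G :: "'a \<Rightarrow> complex"
  assumes "G \<in> borel_measurable M"
  shows "(\<integral> x. q x *\<^sub>R G x \<partial>M) = (\<integral> y. indicator D' y *\<^sub>R G (f y) \<partial>M)"
proof -
  have "(\<integral> x. q x *\<^sub>R G x \<partial>M) = integral\<^sup>L (distr (restrict_space M D') M f) G"
    using assms q_nonneg by (simp add: integral_density flip: density_q_eq_distr_f)
  also have "\<dots> = (\<integral> y. indicator D' y *\<^sub>R G (f y) \<partial>M)"
    using assms measurable_f_D' sets_D' sets.sets_into_space[OF sets_D']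
    by (simp add: integral_distr integral_restrict_space Int_absorb2)
  finally show ?thesis .
qed

lemma AE_comp_f:
  assumes "AE y in M. P y"
  shows "AE x in M. x \<in> D \<longrightarrow> P (f x)"
proof -
  obtain N where N: "{x \<in> space M. \<not> P x} \<subseteq> N" "emeasure M N = 0" "N \<in> sets M"
    using assms by (rule AE_E)
  have "emeasure M (f -` N \<inter> D') = emeasure (density M q) N"
    using N(3) measurable_f_D' sets_D' sets.sets_into_space[OF sets_D']
    by (simp add: density_q_eq_distr_f emeasure_distr emeasure_restrict_space
        space_restrict_space Int_absorb2)
  also have "\<dots> = 0"
    using N(2,3) by (simp add: emeasure_density nn_integral_null_set null_setsI
        flip: nn_integral_set_ennreal)
  finally have "AE x in M. x \<notin> f -` N \<inter> D'"
    using sets_vimage_f_D'[OF N(3)] by (intro AE_not_in) (simp add: null_sets_def)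
  then show ?thesis
    using AE_D' by eventually_elim (use N(1) image_f sets.sets_into_space[OF sets_R] in auto)
qed

text \<open>
  Restricted to R', both q (p \<circ> F) and 1 are densities of E \<mapsto> \<mu>(E \<inter> R') (for the
  former, transport the density p of \<mu> \<circ> f along f), so they agree a.e. by uniqueness
  of densities; this is where \<sigma>-finiteness is needed.
\<close>

lemma q_mult_p_F: "AE x in M. x \<in> R \<longrightarrow> q x * p (F x) = 1"
proof -
  interpret sigma_finite_measure M
    using sigma_finite .
  have "AE x in M. ennreal (q x * p (F x)) * indicator R' x = indicator R' x"
  proof (rule density_unique2)
    show "(\<lambda>x. ennreal (q x * p (F x)) * indicator R' x) \<in> borel_measurable M"
      using measurable_F sets_R' by measurable
  next
    fix A assume A: "A \<in> sets M"
    have "(\<integral>\<^sup>+ x\<in>A. ennreal (q x * p (F x)) * indicator R' x \<partial>M)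
        = (\<integral>\<^sup>+ x. ennreal (q x) * (ennreal (p (F x)) * indicator (A \<inter> R') x) \<partial>M)"
      by (intro nn_integral_cong) (auto simp: indicator_def ennreal_mult q_nonneg p_nonneg)
    also have "\<dots> = (\<integral>\<^sup>+ y. ennreal (p (F (f y))) * indicator (A \<inter> R') (f y) * indicator D' y \<partial>M)"
      using measurable_F sets_R' A by (subst nn_integral_density_q) auto
    also have "\<dots> = (\<integral>\<^sup>+ y. ennreal (p y) * indicator (f -` A \<inter> D') y \<partial>M)"
      by (intro nn_integral_cong) (auto simp: indicator_def dest: F_f_D')
    also have "\<dots> = emeasure M (f ` (f -` A \<inter> D'))"
      using p_RN[OF sets_vimage_f_D'[OF A] le_infI2[OF D'_subset]] by simp
    also have "f ` (f -` A \<inter> D') = A \<inter> R'"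
      unfolding R'_def by auto
    also have "emeasure M (A \<inter> R') = (\<integral>\<^sup>+ x\<in>A. indicator R' x \<partial>M)"
      using A sets_R' by (simp add: indicator_inter_arith ac_simps flip: nn_integral_indicator)
    finally show "(\<integral>\<^sup>+ x\<in>A. ennreal (q x * p (F x)) * indicator R' x \<partial>M)
        = (\<integral>\<^sup>+ x\<in>A. indicator R' x \<partial>M)" .
  qed (use sets_R' in measurable)
  then show ?thesis
    using AE_R' by eventually_elim (auto simp: indicator_def)
qed

lemma adj_comp_op: "AE x in M. Sstar (S \<phi>) x = indicator D x * \<phi> x"
proof -
  have "AE x in M. x \<in> D \<longrightarrow> f x \<in> R \<longrightarrow> q (f x) * p (F (f x)) = 1"
    by (rule AE_comp_f[OF q_mult_p_F])
  then show ?thesis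
    using F_f
  proof eventually_elim
    case (elim x)
    show ?case
    proof (cases "x \<in> D")
      case True
      then have "F (f x) = x" "f x \<in> R" "sqrt (p x) * sqrt (q (f x)) = 1"
        using elim image_f by (auto simp flip: real_sqrt_mult simp: mult.commute)
      then show ?thesis
        using True by (simp add: branch_op_def branch_op_adj_def mult.assoc[symmetric] flip: of_real_mult)
    qed (simp add: branch_op_adj_def)
  qed
qed

lemma op_comp_adj: "AE x in M. S (Sstar \<psi>) x = indicator R x * \<psi> x"
  using q_mult_p_F AE_f_F
proof eventually_elim
  case (elim x)
  show ?case
  proof (cases "x \<in> R")
    case True
    then have "F x \<in> D" "f (F x) = x" "sqrt (q x) * sqrt (p (F x)) = 1"
      using elim by (auto simp flip: real_sqrt_mult)
    then show ?thesis
      using True by (simp add: branch_op_def branch_op_adj_def mult.assoc[symmetric] flip: of_real_mult)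
  qed (simp add: branch_op_def)
qed

lemma measurable_op:
  assumes "\<phi> \<in> borel_measurable M"
  shows "S \<phi> \<in> borel_measurable M"
proof -
  have "(\<lambda>x. \<phi> (F x)) \<in> borel_measurable M"
    using measurable_compose[OF measurable_F assms] .
  then show ?thesis
    unfolding branch_op_def using sets_R by measurable
qed

lemma measurable_comp_f:
  fixes G :: "'a \<Rightarrow> complex"
  assumes "G \<in> borel_measurable M" and "E \<in> sets M" and "E \<subseteq> D"
  shows "(\<lambda>x. if x \<in> E then G (f x) else 0) \<in> borel_measurable M"
proof -
  have "(\<lambda>x. G (f x)) \<in> borel_measurable (restrict_space M E)"
    using measurable_compose[OF measurable_restrict_mono[OF measurable_f assms(3)] assms(1)] .
  then show ?thesis
    using assms(2) sets.sets_into_space[OF assms(2)]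
    by (simp add: measurable_restrict_space_iff Int_absorb2)
qed

lemma measurable_adj: "\<psi> \<in> borel_measurable M \<Longrightarrow> Sstar \<psi> \<in> borel_measurable M"
  unfolding branch_op_adj_def using measurable_comp_f[OF _ sets_D order_refl] sets_D by measurable

lemma nn_integral_op_le:
  assumes "\<phi> \<in> borel_measurable M"
  shows "(\<integral>\<^sup>+ x. ennreal ((cmod (S \<phi> x))\<^sup>2) \<partial>M) \<le> (\<integral>\<^sup>+ x. ennreal ((cmod (\<phi> x))\<^sup>2) \<partial>M)"
proof -
  have "(\<integral>\<^sup>+ x. ennreal ((cmod (S \<phi> x))\<^sup>2) \<partial>M)
      = (\<integral>\<^sup>+ x. ennreal (q x) * ennreal (indicator R x * (cmod (\<phi> (F x)))\<^sup>2) \<partial>M)"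
    by (intro nn_integral_cong)
      (auto simp: branch_op_def norm_mult power_mult_distrib q_nonneg indicator_def
        simp flip: ennreal_mult)
  also have "\<dots> = (\<integral>\<^sup>+ y. ennreal (indicator R (f y) * (cmod (\<phi> (F (f y))))\<^sup>2) * indicator D' y \<partial>M)"
    using assms measurable_F sets_R by (subst nn_integral_density_q) auto
  also have "\<dots> \<le> (\<integral>\<^sup>+ x. ennreal ((cmod (\<phi> x))\<^sup>2) \<partial>M)"
    by (intro nn_integral_mono) (auto simp: indicator_def dest: F_f_D')
  finally show ?thesis .
qed

lemma nn_integral_adj_le:
  assumes "\<psi> \<in> borel_measurable M"
  shows "(\<integral>\<^sup>+ x. ennreal ((cmod (Sstar \<psi> x))\<^sup>2) \<partial>M) \<le> (\<integral>\<^sup>+ x. ennreal ((cmod (\<psi> x))\<^sup>2) \<partial>M)"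
proof -
  have "(\<integral>\<^sup>+ x. ennreal ((cmod (Sstar \<psi> x))\<^sup>2) \<partial>M)
      = (\<integral>\<^sup>+ y. ennreal (indicator R (f y) * p (F (f y)) * (cmod (\<psi> (f y)))\<^sup>2) * indicator D' y \<partial>M)"
    using AE_D' image_f exceptional_set(2)
    by (intro nn_integral_cong_AE)
      (auto elim!: eventually_mono simp: branch_op_adj_def norm_mult power_mult_distrib
        p_nonneg indicator_def D'_def dest: F_f_D')
  also have "\<dots> = (\<integral>\<^sup>+ x. ennreal (q x) * ennreal (indicator R x * p (F x) * (cmod (\<psi> x))\<^sup>2) \<partial>M)"
    using assms measurable_F sets_R by (subst nn_integral_density_q) auto
  also have "\<dots> = (\<integral>\<^sup>+ x. ennreal (indicator R x * (cmod (\<psi> x))\<^sup>2) \<partial>M)"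
    using q_mult_p_F
    by (intro nn_integral_cong_AE)
      (auto elim!: eventually_mono simp: indicator_def q_nonneg mult.assoc[symmetric]
        simp flip: ennreal_mult')
  also have "\<dots> \<le> (\<integral>\<^sup>+ x. ennreal ((cmod (\<psi> x))\<^sup>2) \<partial>M)"
    by (intro nn_integral_mono) (auto simp: indicator_def)
  finally show ?thesis .
qed

lemma bounded_L2_op: "bounded_L2_op M S"
proof (rule bounded_L2_op_if_contraction[OF measurable_op nn_integral_op_le])
  show "ae_eq M (S \<phi>) (S \<psi>)" if "ae_eq M \<phi> \<psi>" for \<phi> \<psi>
    using AE_comp_nonsingular[OF nonsingular that[unfolded ae_eq_def]]
    by (auto simp: ae_eq_def branch_op_def elim!: eventually_mono)
qed (auto simp: branch_op_def algebra_simps)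

lemma bounded_L2_adj: "bounded_L2_op M Sstar"
proof (rule bounded_L2_op_if_contraction[OF measurable_adj nn_integral_adj_le])
  show "ae_eq M (Sstar \<phi>) (Sstar \<psi>)" if "ae_eq M \<phi> \<psi>" for \<phi> \<psi>
    using AE_comp_f[OF that[unfolded ae_eq_def]]
    by (auto simp: ae_eq_def branch_op_adj_def elim!: eventually_mono)
qed (auto simp: branch_op_adj_def algebra_simps)

lemma l2_inner_op_adj:
  assumes \<phi>: "\<phi> \<in> borel_measurable M" and \<psi>: "\<psi> \<in> borel_measurable M"
  shows "l2_inner M (S \<phi>) \<psi> = l2_inner M \<phi> (Sstar \<psi>)"
proof -
  define G where "G x = complex_of_real (indicator R x * sqrt (p (F x))) * \<phi> (F x) * cnj (\<psi> x)" for x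
  have "(\<lambda>x. \<phi> (F x)) \<in> borel_measurable M"
    using measurable_compose[OF measurable_F \<phi>] .
  then have G: "G \<in> borel_measurable M"
    unfolding G_def using \<psi> measurable_F sets_R by measurable
  have "l2_inner M (S \<phi>) \<psi> = (\<integral> x. q x *\<^sub>R G x \<partial>M)"
    unfolding l2_inner_def
  proof (rule integral_cong_AE)
    show "(\<lambda>x. S \<phi> x * cnj (\<psi> x)) \<in> borel_measurable M"
      using measurable_op[OF \<phi>] \<psi> by measurable
    show "(\<lambda>x. q x *\<^sub>R G x) \<in> borel_measurable M"
      using G by measurable
    show "AE x in M. S \<phi> x * cnj (\<psi> x) = q x *\<^sub>R G x"
      using q_mult_p_F
    proof eventually_elim
      case (elim x)
      show ?case
      proof (cases "x \<in> R")
        case True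
        then have "q x * sqrt (p (F x)) = sqrt (q x)"
          using elim q_nonneg p_nonneg mult_sqrt_eq_sqrt by blast
        then show ?thesis
          using True by (simp add: branch_op_def G_def scaleR_conv_of_real mult.assoc[symmetric]
              flip: of_real_mult)
      qed (simp add: branch_op_def G_def)
    qed
  qed
  also have "\<dots> = (\<integral> y. indicator D' y *\<^sub>R G (f y) \<partial>M)"
    using integral_density_q[OF G] .
  also have "\<dots> = l2_inner M \<phi> (Sstar \<psi>)"
    unfolding l2_inner_def
  proof (rule integral_cong_AE)
    have "(\<lambda>y. indicator D' y *\<^sub>R G (f y)) = (\<lambda>y. if y \<in> D' then G (f y) else 0)"
      by (auto simp: indicator_def)
    then show "(\<lambda>y. indicator D' y *\<^sub>R G (f y)) \<in> borel_measurable M"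
      using measurable_comp_f[OF G sets_D' D'_subset] by simp
    show "AE x in M. indicator D' x *\<^sub>R G (f x) = \<phi> x * cnj (Sstar \<psi> x)"
      using AE_D'
    proof eventually_elim
      case (elim x)
      then show ?case
        using D'_subset F_f_D' image_f by (cases "x \<in> D'") (auto simp: branch_op_adj_def G_def)
    qed
  qed (use measurable_adj[OF \<psi>] \<phi> in measurable)
  finally show ?thesis .
qed

lemma is_adjoint: "is_adjoint M S Sstar"
  using bounded_L2_op bounded_L2_adj l2_inner_op_adj
  unfolding is_adjoint_def by (simp add: L2_def)

end

locale CK_family =
  fixes M :: "'a measure" and A :: "nat \<Rightarrow> nat \<Rightarrow> nat" and D R :: "nat \<Rightarrow> 'a set"
    and S Sstar :: "nat \<Rightarrow> 'a op"
  assumes adjoint: "is_adjoint M (S i) (Sstar i)"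
    and source_projection: "AE x in M. Sstar i (S i \<phi>) x = indicator (D i) x * \<phi> x"
    and range_projection: "AE x in M. S i (Sstar i \<phi>) x = indicator (R i) x * \<phi> x"
    and vanishes_outside_range: "AE x in M. x \<notin> R i \<longrightarrow> S i \<phi> x = 0"
    and A_zero_one: "A i j \<in> {0, 1}"
    and ranges_disjoint: "i \<noteq> j \<Longrightarrow> AE x in M. x \<in> R i \<longrightarrow> x \<notin> R j"
    and range_outside_domain: "A i j = 0 \<Longrightarrow> AE x in M. x \<in> R j \<longrightarrow> x \<notin> D i"
    and range_inside_domain: "A i j = 1 \<Longrightarrow> AE x in M. x \<in> R j \<longrightarrow> x \<in> D i"
    and ranges_cover: "finite U \<Longrightarrow> finite V \<Longrightarrow> finite {j. Acoef A U V j = 1} \<Longrightarrow>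
      AE x in M. x \<in> (\<Inter>u\<in>U. D u) \<inter> (\<Inter>v\<in>V. - D v) \<longleftrightarrow> x \<in> (\<Union>j\<in>{j. Acoef A U V j = 1}. R j)"
begin

lemma partial_isometry: "op_eq M (S i \<circ> Sstar i \<circ> S i) (S i)"
  unfolding op_eq_def ae_eq_def
proof
  fix \<phi> :: "'a \<Rightarrow> complex"
  show "AE x in M. (S i \<circ> Sstar i \<circ> S i) \<phi> x = S i \<phi> x"
    using range_projection[of i "S i \<phi>"] vanishes_outside_range[of i \<phi>]
    by eventually_elim (auto simp: indicator_def)
qed

lemma range_projections_orthogonal:
  assumes "i \<noteq> j"
  shows "op_eq M (S i \<circ> Sstar i \<circ> S j \<circ> Sstar j) op_zero"
  unfolding op_eq_def ae_eq_def
proof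
  fix \<phi> :: "'a \<Rightarrow> complex"
  show "AE x in M. (S i \<circ> Sstar i \<circ> S j \<circ> Sstar j) \<phi> x = op_zero \<phi> x"
    using range_projection[of i "S j (Sstar j \<phi>)"] range_projection[of j \<phi>] ranges_disjoint[OF assms]
    by eventually_elim (auto simp: op_zero_def indicator_def)
qed

lemma source_projections_commute:
  "op_eq M (Sstar i \<circ> S i \<circ> Sstar j \<circ> S j) (Sstar j \<circ> S j \<circ> Sstar i \<circ> S i)"
  unfolding op_eq_def ae_eq_def
proof
  fix \<phi> :: "'a \<Rightarrow> complex"
  show "AE x in M. (Sstar i \<circ> S i \<circ> Sstar j \<circ> S j) \<phi> x = (Sstar j \<circ> S j \<circ> Sstar i \<circ> S i) \<phi> x"
    using source_projection[of i "Sstar j (S j \<phi>)"] source_projection[of j \<phi>]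
      source_projection[of j "Sstar i (S i \<phi>)"] source_projection[of i \<phi>]
    by eventually_elim simp
qed

lemma source_range_relation:
  "op_eq M (Sstar i \<circ> S i \<circ> S j \<circ> Sstar j) (op_scale (of_nat (A i j)) (S j \<circ> Sstar j))"
  unfolding op_eq_def ae_eq_def
proof
  fix \<phi> :: "'a \<Rightarrow> complex"
  have A: "A i j = 0 \<or> A i j = 1"
    using A_zero_one[of i j] by auto
  then have "AE x in M. x \<in> R j \<longrightarrow> (x \<in> D i \<longleftrightarrow> A i j = 1)"
    using range_outside_domain[of i j] range_inside_domain[of i j] by auto
  then show "AE x in M. (Sstar i \<circ> S i \<circ> S j \<circ> Sstar j) \<phi> x
      = op_scale (of_nat (A i j)) (S j \<circ> Sstar j) \<phi> x"
    using source_projection[of i "S j (Sstar j \<phi>)"] range_projection[of j \<phi>]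
    by eventually_elim (use A in \<open>auto simp: op_scale_def indicator_def\<close>)
qed

lemma source_projection_product:
  assumes "finite U" and "finite V"
  shows "AE x in M. (op_prod (\<lambda>u. Sstar u \<circ> S u) U \<circ> op_prod (\<lambda>v. op_sub id (Sstar v \<circ> S v)) V) \<phi> x
    = indicator ((\<Inter>u\<in>U. D u) \<inter> (\<Inter>v\<in>V. - D v)) x * \<phi> x"
proof -
  let ?\<psi> = "op_prod (\<lambda>v. op_sub id (Sstar v \<circ> S v)) V \<phi>"
  have "AE x in M. ?\<psi> x = (\<Prod>v\<in>V. indicator (- D v) x) * \<phi> x"
    by (intro op_prod_multiplication_AE[OF assms(2)])
      (use source_projection in \<open>auto simp: op_sub_def indicator_compl left_diff_distrib
        elim!: eventually_mono\<close>)
  moreover have "AE x in M. op_prod (\<lambda>u. Sstar u \<circ> S u) U ?\<psi> x = (\<Prod>u\<in>U. indicator (D u) x) * ?\<psi> x"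
    by (intro op_prod_multiplication_AE[OF assms(1)]) (simp add: source_projection)
  ultimately show ?thesis
    by eventually_elim (use assms in \<open>simp add: prod_indicator_eq_indicator_Inter indicator_inter_arith\<close>)
qed

lemma range_projection_sum:
  assumes "finite J"
  shows "AE x in M. op_sum (\<lambda>j. S j \<circ> Sstar j) J \<phi> x = indicator (\<Union>j\<in>J. R j) x * \<phi> x"
proof -
  have "AE x in M. \<forall>j\<in>J. S j (Sstar j \<phi>) x = indicator (R j) x * \<phi> x"
    using assms range_projection by (auto intro!: AE_finite_allI)
  moreover have "AE x in M. \<forall>i\<in>J. \<forall>j\<in>J. i \<noteq> j \<longrightarrow> x \<in> R i \<longrightarrow> x \<notin> R j"
    using assms ranges_disjoint by (auto intro!: AE_finite_allI)
  ultimately show ?thesis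
  proof eventually_elim
    case (elim x)
    then have "op_sum (\<lambda>j. S j \<circ> Sstar j) J \<phi> x = (\<Sum>j\<in>J. indicator (R j) x) * \<phi> x"
      by (simp add: op_sum_def sum_distrib_right)
    then show ?case
      using sum_indicator_eq_indicator_Union[OF assms, where R=R and x=x and 'b=complex] elim(2) by simp
  qed
qed

lemma source_product_relation:
  assumes "finite U" and "finite V" and "finite {j. Acoef A U V j \<noteq> 0}"
  shows "op_eq M (op_prod (\<lambda>u. Sstar u \<circ> S u) U \<circ> op_prod (\<lambda>v. op_sub id (Sstar v \<circ> S v)) V)
    (op_sum (\<lambda>j. op_scale (of_nat (Acoef A U V j)) (S j \<circ> Sstar j)) {j. Acoef A U V j \<noteq> 0})"
proof -
  define J where "J = {j. Acoef A U V j \<noteq> 0}"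
  have Acoef_J: "Acoef A U V j = 1" if "j \<in> J" for j
    using that Acoef_zero_one[where A=A and j=j, OF A_zero_one assms(1,2)] unfolding J_def
    by (simp split: if_splits)
  then have J: "J = {j. Acoef A U V j = 1}"
    unfolding J_def by auto
  have "op_sum (\<lambda>j. op_scale (of_nat (Acoef A U V j)) (S j \<circ> Sstar j)) J = op_sum (\<lambda>j. S j \<circ> Sstar j) J"
    using Acoef_J by (auto simp: op_sum_def op_scale_def intro!: sum.cong)
  moreover have "AE x in M. (op_prod (\<lambda>u. Sstar u \<circ> S u) U \<circ> op_prod (\<lambda>v. op_sub id (Sstar v \<circ> S v)) V) \<phi> x
      = op_sum (\<lambda>j. S j \<circ> Sstar j) J \<phi> x" for \<phi>
  proof -
    have "finite J"
      using assms(3) unfolding J_def .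
    then have "AE x in M. x \<in> (\<Inter>u\<in>U. D u) \<inter> (\<Inter>v\<in>V. - D v) \<longleftrightarrow> x \<in> (\<Union>j\<in>J. R j)"
      using ranges_cover[OF assms(1,2)] unfolding J by simp
    then show ?thesis
      using source_projection_product[OF assms(1,2), of \<phi>] range_projection_sum[OF \<open>finite J\<close>, of \<phi>]
      by eventually_elim (simp split: split_indicator)
  qed
  ultimately show ?thesis
    unfolding op_eq_def ae_eq_def J_def[symmetric] by simp
qed

lemma OA_representation: "OA_representation M A S Sstar"
  unfolding OA_representation_def
  using adjoint partial_isometry range_projections_orthogonal source_projections_commute
    source_range_relation source_product_relation
  by (intro conjI allI impI) simp_all

end

lemma branching_system_branch:
  assumes "sigma_finite_measure M" and "branching_system M A f D R F Phif Phiinv"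
  shows "branch M (D i) (R i) (f i) F (Phif i) (Phiinv i)"
  using assms unfolding branching_system_def branch_def by auto

lemma branching_system_CK_family:
  assumes sigma_finite: "sigma_finite_measure M" and A: "\<forall>i j. A i j \<in> {0, 1}"
    and bs: "branching_system M A f D R F Phif Phiinv"
  shows "CK_family M A D R (\<lambda>i. branch_op (R i) (Phiinv i) F) (\<lambda>i. branch_op_adj (D i) (Phif i) (f i))"
proof -
  note branch = branching_system_branch[OF sigma_finite bs]
  have sets: "D i \<in> sets M" "R i \<in> sets M" for i
    using bs unfolding branching_system_def by auto
  have AE_null: "AE x in M. x \<notin> E" if "E \<in> sets M" and "emeasure M E = 0" for E
    using that by (intro AE_not_in) (simp add: null_sets_def)
  show ?thesis
  proof
    fix i j :: nat
    show "A i j \<in> {0, 1}"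
      using A by blast
    show "i \<noteq> j \<Longrightarrow> AE x in M. x \<in> R i \<longrightarrow> x \<notin> R j"
      using AE_null[of "R i \<inter> R j"] bs sets unfolding branching_system_def by auto
    show "A i j = 0 \<Longrightarrow> AE x in M. x \<in> R j \<longrightarrow> x \<notin> D i"
      using AE_null[of "R j \<inter> D i"] bs sets unfolding branching_system_def by auto
    show "A i j = 1 \<Longrightarrow> AE x in M. x \<in> R j \<longrightarrow> x \<in> D i"
      using AE_null[of "R j - D i"] bs sets unfolding branching_system_def by auto
  next
    fix i :: nat and \<phi> :: "'a \<Rightarrow> complex"
    show "is_adjoint M (branch_op (R i) (Phiinv i) F) (branch_op_adj (D i) (Phif i) (f i))"
      using branch.is_adjoint[OF branch] .
    show "AE x in M. branch_op_adj (D i) (Phif i) (f i) (branch_op (R i) (Phiinv i) F \<phi>) x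
        = indicator (D i) x * \<phi> x"
      using branch.adj_comp_op[OF branch] .
    show "AE x in M. branch_op (R i) (Phiinv i) F (branch_op_adj (D i) (Phif i) (f i) \<phi>) x
        = indicator (R i) x * \<phi> x"
      using branch.op_comp_adj[OF branch] .
    show "AE x in M. x \<notin> R i \<longrightarrow> branch_op (R i) (Phiinv i) F \<phi> x = 0"
      by (simp add: branch_op_def)
  next
    fix U V :: "nat set"
    assume fin: "finite U" "finite V" "finite {j. Acoef A U V j = 1}"
    let ?L = "space M \<inter> (\<Inter>u\<in>U. D u) \<inter> (\<Inter>v\<in>V. space M - D v)"
    let ?R = "\<Union>j\<in>{j. Acoef A U V j = 1}. R j"
    have "ae_set_eq M ?L ?R"
      using bs fin unfolding branching_system_def by blast
    then have "?L \<in> sets M" "?R \<in> sets M" "emeasure M (?L - ?R) = 0" "emeasure M (?R - ?L) = 0"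
      unfolding ae_set_eq_def by blast+
    from AE_null[OF sets.Diff[OF this(1,2)] this(3)] AE_null[OF sets.Diff[OF this(2,1)] this(4)] show "AE x in M. x \<in> (\<Inter>u\<in>U. D u) \<inter> (\<Inter>v\<in>V. - D v) \<longleftrightarrow> x \<in> ?R"
      using AE_space by eventually_elim blast
  qed
qed

theorem mainTheorem2:
  fixes M :: "'a measure" and A :: "nat \<Rightarrow> nat \<Rightarrow> nat"
    and f :: "nat \<Rightarrow> 'a \<Rightarrow> 'a" and D R :: "nat \<Rightarrow> 'a set" and F :: "'a \<Rightarrow> 'a"
    and Phif Phiinv :: "nat \<Rightarrow> 'a \<Rightarrow> real"
  assumes "sigma_finite_measure M"
    and "\<forall>i j. A i j \<in> {0, 1}"
    and "branching_system M A f D R F Phif Phiinv"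
  shows "\<exists>S Sstar. OA_representation M A S Sstar \<and>
           (\<forall>i. \<forall>\<phi>\<in>L2 M. ae_eq M (S i \<phi>)
              (\<lambda>x. complex_of_real (indicator (R i) x * sqrt (Phiinv i x)) * \<phi> (F x)))"
proof -
  interpret CK_family M A D R "\<lambda>i. branch_op (R i) (Phiinv i) F" "\<lambda>i. branch_op_adj (D i) (Phif i) (f i)"
    using branching_system_CK_family[OF assms] .
  show ?thesis
    using OA_representation by (auto simp: branch_op_def ae_eq_def)
qed

end
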